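(* The assignment $\Gamma:\mathbf{FinArb}^<_\star\to\mathbf{TArb}$ (defined below) is a well-defined functor; in particular, for every morphism $h:T\to T'$ of $\mathbf{FinArb}^<_\star$, $\Gamma(h)$ is a homomorphism of pointed edge-ordered graphs $\Gamma(T)\to\Gamma(T')$ that preserves longest paths.
   Context: A (directed) graph is $(V,\to)$ with $\to\subseteq V\times V$; $N(u)$ is the set of outgoing edges of $u$. A pointed graph has a distinguished vertex $v_0$; connected means every vertex is reachable by a path from $v_0$. A path is a finite sequence $v_1\to\cdots\to v_n$ of vertices joined by edges, with length $|\pi|$; co-initial paths share their source; $\pi\sqsubset\sigma$ means $\pi$ is a proper prefix of $\sigma$. A finite edge-ordered graph is a finite graph with a strict linear order $\triangleleft$ on each neighborhood. Lexicographic path order: if $\pi\sqsubset\sigma$ then $\pi\prec\sigma$ (symmetrically); otherwise, with $\zeta$ the longest common prefix, $u$ its target and $v_1,v_2$ the next vertices, $\pi\prec\sigma$ iff $u\to v_1\triangleleft u\to v_2$. Shortlex: $\pi\prec^s\sigma$ iff $|\pi|<|\sigma|$ or ($|\pi|=|\sigma|$ and $\pi\prec\sigma$). A homomorphism of finite pointed edge-ordered graphs $h:G\to H$ is a vertex map with (i) $u\to v$ implies $h(u)\to h(v)$; (ii) the distinguished vertex of $G$ is the unique vertex mapped to the distinguished vertex of $H$; (iii) $u\to v_1\triangleleft u\to v_2$ implies $h(u)\to h(v_1)\triangleleft h(u)\to h(v_2)$. An arborescence is a pointed graph with a unique path $v_0\rightsquigarrow u$ for every $u$. $\mathbf{FinArb}^<_\star$: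 finite edge-ordered arborescences with homomorphisms of pointed edge-ordered graphs. $\mathbf{TArb}$: objects are finite, pointed, connected, edge-ordered graphs $G$ for which there is a finite, connected, pointed, edge-ordered arborescence $T$ on the same vertices with the same distinguished point such that the edge relation of $G$ is the transitive closure of that of $T$ and $u\to v_1\triangleleft u\to v_2$ in $G$ iff $(v_0\rightsquigarrow v_1)\prec^s(v_0\rightsquigarrow v_2)$ for the unique paths in $T$; in such $G$ longest paths $u\rightsquigarrow v$ are unique. Morphisms of $\mathbf{TArb}$ are homomorphisms satisfying (i)–(iii) that map the longest path $u\rightsquigarrow v$ to the longest path $h(u)\rightsquigarrow h(v)$. $\Gamma(T)$ has the vertices and distinguished point of $T$, edge relation the transitive closure of that of $T$, and $u\to v_1\triangleleft u\to v_2$ iff $(v_0\rightsquigarrow v_1)\prec^s(v_0\rightsquigarrow v_2)$ in $T$; $\Gamma(h)(v)=h(v)$. *)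

theory Defs
  imports Main "HOL-Library.Sublist"
begin

text \<open>A pointed edge-ordered graph: vertices, edge relation, distinguished vertex,
  and for each vertex u a relation eord u v1 v2 meaning (u -> v1) before (u -> v2).\<close>
record 'a eograph =
  verts :: "'a set"
  arcs  :: "('a \<times> 'a) set"
  root  :: 'a
  eord  :: "'a \<Rightarrow> 'a \<Rightarrow> 'a \<Rightarrow> bool"

definition nbhd :: "('a, 'b) eograph_scheme \<Rightarrow> 'a \<Rightarrow> 'a set" where
  "nbhd G u = {v. (u, v) \<in> arcs G}"

definition is_path :: "('a, 'b) eograph_scheme \<Rightarrow> 'a list \<Rightarrow> bool" where
  "is_path G p \<longleftrightarrow> p \<noteq> [] \<and> set p \<subseteq> verts G \<and>
     (\<forall>i. Suc i < length p \<longrightarrow> (p ! i, p ! Suc i) \<in> arcs G)"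

definition path_from_to :: "('a, 'b) eograph_scheme \<Rightarrow> 'a list \<Rightarrow> 'a \<Rightarrow> 'a \<Rightarrow> bool" where
  "path_from_to G p u v \<longleftrightarrow> is_path G p \<and> hd p = u \<and> last p = v"

definition path_len :: "'a list \<Rightarrow> nat" where
  "path_len p = length p - 1"

definition fin_eo_graph :: "('a, 'b) eograph_scheme \<Rightarrow> bool" where
  "fin_eo_graph G \<longleftrightarrow> finite (verts G) \<and> root G \<in> verts G \<and> arcs G \<subseteq> verts G \<times> verts G \<and>
     (\<forall>u v1 v2. eord G u v1 v2 \<longrightarrow> (u, v1) \<in> arcs G \<and> (u, v2) \<in> arcs G) \<and>
     (\<forall>u\<in>verts G.
        (\<forall>v\<in>nbhd G u. \<not> eord G u v v) \<and>
        (\<forall>v1\<in>nbhd G u. \<forall>v2\<in>nbhd G u. \<forall>v3\<in>nbhd G u.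
            eord G u v1 v2 \<longrightarrow> eord G u v2 v3 \<longrightarrow> eord G u v1 v3) \<and>
        (\<forall>v1\<in>nbhd G u. \<forall>v2\<in>nbhd G u. v1 \<noteq> v2 \<longrightarrow> eord G u v1 v2 \<or> eord G u v2 v1))"

definition connected_pg :: "('a, 'b) eograph_scheme \<Rightarrow> bool" where
  "connected_pg G \<longleftrightarrow> (\<forall>u\<in>verts G. \<exists>p. path_from_to G p (root G) u)"

definition arborescence :: "('a, 'b) eograph_scheme \<Rightarrow> bool" where
  "arborescence G \<longleftrightarrow> (\<forall>u\<in>verts G. \<exists>!p. path_from_to G p (root G) u)"

definition fin_arb :: "('a, 'b) eograph_scheme \<Rightarrow> bool" where
  "fin_arb T \<longleftrightarrow> fin_eo_graph T \<and> arborescence T"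

definition lex_less :: "('a, 'b) eograph_scheme \<Rightarrow> 'a list \<Rightarrow> 'a list \<Rightarrow> bool" where
  "lex_less G p q \<longleftrightarrow> strict_prefix p q \<or>
     (\<exists>z v1 v2 r1 r2. z \<noteq> [] \<and> p = z @ v1 # r1 \<and> q = z @ v2 # r2 \<and> eord G (last z) v1 v2)"

definition shortlex_less :: "('a, 'b) eograph_scheme \<Rightarrow> 'a list \<Rightarrow> 'a list \<Rightarrow> bool" where
  "shortlex_less G p q \<longleftrightarrow> path_len p < path_len q \<or>
     (path_len p = path_len q \<and> lex_less G p q)"

definition tpath :: "('a, 'b) eograph_scheme \<Rightarrow> 'a \<Rightarrow> 'a list" where
  "tpath T v = (THE p. path_from_to T p (root T) v)"

definition eo_hom :: "('a, 'c) eograph_scheme \<Rightarrow> ('b, 'd) eograph_scheme \<Rightarrow> ('a \<Rightarrow> 'b) \<Rightarrow> bool" where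
  "eo_hom G H h \<longleftrightarrow> h ` verts G \<subseteq> verts H \<and>
     (\<forall>u v. (u, v) \<in> arcs G \<longrightarrow> (h u, h v) \<in> arcs H) \<and>
     (\<forall>v\<in>verts G. h v = root H \<longleftrightarrow> v = root G) \<and>
     (\<forall>u v1 v2. (u, v1) \<in> arcs G \<longrightarrow> (u, v2) \<in> arcs G \<longrightarrow> eord G u v1 v2 \<longrightarrow>
        eord H (h u) (h v1) (h v2))"

definition finarb_mor :: "('a, 'c) eograph_scheme \<Rightarrow> ('b, 'd) eograph_scheme \<Rightarrow> ('a \<Rightarrow> 'b) \<Rightarrow> bool" where
  "finarb_mor T T' h \<longleftrightarrow> fin_arb T \<and> fin_arb T' \<and> eo_hom T T' h"

definition longest_path :: "('a, 'b) eograph_scheme \<Rightarrow> 'a list \<Rightarrow> 'a \<Rightarrow> 'a \<Rightarrow> bool" where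
  "longest_path G p u v \<longleftrightarrow> path_from_to G p u v \<and>
     (\<forall>q. path_from_to G q u v \<longrightarrow> path_len q \<le> path_len p)"

definition tarb_obj :: "'a eograph \<Rightarrow> bool" where
  "tarb_obj G \<longleftrightarrow> fin_eo_graph G \<and> connected_pg G \<and>
     (\<exists>T :: 'a eograph. fin_eo_graph T \<and> connected_pg T \<and> arborescence T \<and>
        verts T = verts G \<and> root T = root G \<and> arcs G = (arcs T)\<^sup>+ \<and>
        (\<forall>u v1 v2. (u, v1) \<in> arcs G \<longrightarrow> (u, v2) \<in> arcs G \<longrightarrow>
           (eord G u v1 v2 \<longleftrightarrow> shortlex_less T (tpath T v1) (tpath T v2))))"

definition tarb_mor :: "'a eograph \<Rightarrow> 'b eograph \<Rightarrow> ('a \<Rightarrow> 'b) \<Rightarrow> bool" where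
  "tarb_mor G H h \<longleftrightarrow> tarb_obj G \<and> tarb_obj H \<and> eo_hom G H h \<and>
     (\<forall>p u v. longest_path G p u v \<longrightarrow> longest_path H (map h p) (h u) (h v))"

definition Gamma :: "'a eograph \<Rightarrow> 'a eograph" where
  "Gamma T = \<lparr> verts = verts T, arcs = (arcs T)\<^sup>+, root = root T,
     eord = (\<lambda>u v1 v2. (u, v1) \<in> (arcs T)\<^sup>+ \<and> (u, v2) \<in> (arcs T)\<^sup>+ \<and>
                        shortlex_less T (tpath T v1) (tpath T v2)) \<rparr>"

definition Gamma_mor :: "('a \<Rightarrow> 'b) \<Rightarrow> ('a \<Rightarrow> 'b)" where
  "Gamma_mor h = (\<lambda>v. h v)"

end

theory Submission
  imports Defs
begin

text \<open>Shortlex order on root paths of an arborescence T is a strict linear order on every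
  neighbourhood, so Gamma T is an object of TArb with T itself as the witnessing tree.
  A homomorphism of arborescences sends root paths to root paths, hence preserves depth and,
  being monotone on out-edges, the shortlex order. Depth strictly increases along every edge
  of the transitive closure, so a path u \<leadsto> v in Gamma T has length at most
  depth v - depth u, and the tree path attains this bound. Longest paths are therefore
  exactly the paths of length depth v - depth u, a property that depth-preserving
  homomorphisms carry over.\<close>

lemma is_path_snoc:
  assumes "is_path G p" "(last p, b) \<in> arcs G" "b \<in> verts G"
  shows "is_path G (p @ [b])"
  using assms unfolding is_path_def
  by (auto simp: nth_append last_conv_nth less_Suc_eq) (metis diff_Suc_Suc diff_zero)

lemma path_from_to_snoc:
  "path_from_to G p u a \<Longrightarrow> (a, b) \<in> arcs G \<Longrightarrow> b \<in> verts G \<Longrightarrow> path_from_to G (p @ [b]) u b"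
  by (simp add: path_from_to_def is_path_snoc) (simp add: is_path_def)

lemma is_path_mono:
  "is_path G p \<Longrightarrow> verts G \<subseteq> verts H \<Longrightarrow> arcs G \<subseteq> arcs H \<Longrightarrow> is_path H p"
  by (auto simp: is_path_def)

lemma is_path_rtrancl:
  assumes p: "is_path G p"
  shows "(hd p, last p) \<in> (arcs G)\<^sup>*"
proof -
  have "(p ! 0, p ! i) \<in> (arcs G)\<^sup>*" if "i < length p" for i
    using that
  proof (induction i)
    case (Suc i)
    with p show ?case by (auto simp: is_path_def intro: rtrancl_into_rtrancl)
  qed simp
  from this[of "length p - 1"] p show ?thesis
    by (simp add: is_path_def hd_conv_nth last_conv_nth)
qed

lemma path_len_le_strict_mono:
  fixes f :: "'a \<Rightarrow> nat"
  assumes p: "is_path G p" and f: "\<And>u v. (u, v) \<in> arcs G \<Longrightarrow> f u < f v"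
  shows "f (hd p) + path_len p \<le> f (last p)"
proof -
  have "f (p ! 0) + i \<le> f (p ! i)" if "i < length p" for i
    using that
  proof (induction i)
    case (Suc i)
    with f[of "p ! i" "p ! Suc i"] p show ?case by (simp add: is_path_def)
  qed simp
  from this[of "length p - 1"] p show ?thesis
    by (simp add: is_path_def hd_conv_nth last_conv_nth path_len_def)
qed

lemma eord_arcs: "fin_eo_graph G \<Longrightarrow> eord G u a b \<Longrightarrow> (u, a) \<in> arcs G \<and> (u, b) \<in> arcs G"
  by (simp add: fin_eo_graph_def)

lemma eord_irrefl: "fin_eo_graph G \<Longrightarrow> \<not> eord G u a a"
  unfolding fin_eo_graph_def nbhd_def by blast

lemma eord_trans: "fin_eo_graph G \<Longrightarrow> eord G u a b \<Longrightarrow> eord G u b c \<Longrightarrow> eord G u a c"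
  unfolding fin_eo_graph_def nbhd_def by blast

lemma eord_total:
  "fin_eo_graph G \<Longrightarrow> (u, a) \<in> arcs G \<Longrightarrow> (u, b) \<in> arcs G \<Longrightarrow> a \<noteq> b \<Longrightarrow>
    eord G u a b \<or> eord G u b a"
  unfolding fin_eo_graph_def nbhd_def by blast

lemma fin_eo_graphI:
  assumes "finite (verts G)" "root G \<in> verts G" "arcs G \<subseteq> verts G \<times> verts G"
    and "\<And>u a b. eord G u a b \<Longrightarrow> (u, a) \<in> arcs G \<and> (u, b) \<in> arcs G"
    and "\<And>u a. \<not> eord G u a a"
    and "\<And>u a b c. eord G u a b \<Longrightarrow> eord G u b c \<Longrightarrow> eord G u a c"
    and "\<And>u a b. (u, a) \<in> arcs G \<Longrightarrow> (u, b) \<in> arcs G \<Longrightarrow> a \<noteq> b \<Longrightarrow> eord G u a b \<or> eord G u b a"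
  shows "fin_eo_graph G"
  using assms unfolding fin_eo_graph_def nbhd_def by blast

lemma trancl_arcs_subset: "fin_eo_graph G \<Longrightarrow> (arcs G)\<^sup>+ \<subseteq> verts G \<times> verts G"
  by (simp add: fin_eo_graph_def trancl_subset_Sigma)

lemma lex_less_same_length_iff:
  assumes "length p = length q"
  shows "lex_less G p q \<longleftrightarrow>
    (\<exists>i. 0 < i \<and> i < length p \<and> (\<forall>k<i. p ! k = q ! k) \<and> eord G (p ! (i - 1)) (p ! i) (q ! i))"
proof
  assume "lex_less G p q"
  moreover have "\<not> strict_prefix p q" using assms prefix_length_less by fastforce
  ultimately obtain z v1 v2 r1 r2 where z: "z \<noteq> []" "p = z @ v1 # r1" "q = z @ v2 # r2"
    "eord G (last z) v1 v2" unfolding lex_less_def by blast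
  then show "\<exists>i. 0 < i \<and> i < length p \<and> (\<forall>k<i. p ! k = q ! k) \<and> eord G (p ! (i - 1)) (p ! i) (q ! i)"
    by (intro exI[of _ "length z"]) (auto simp: nth_append last_conv_nth)
next
  assume "\<exists>i. 0 < i \<and> i < length p \<and> (\<forall>k<i. p ! k = q ! k) \<and> eord G (p ! (i - 1)) (p ! i) (q ! i)"
  then obtain i where i: "0 < i" "i < length p" "\<forall>k<i. p ! k = q ! k" "eord G (p ! (i - 1)) (p ! i) (q ! i)"
    by blast
  have common: "take i q = take i p" using i(2,3) assms by (intro nth_equalityI) auto
  have p: "p = take i p @ p ! i # drop (Suc i) p" using i(2) by (simp add: id_take_nth_drop)
  have q: "q = take i p @ q ! i # drop (Suc i) q" using i(2) assms common by (metis id_take_nth_drop)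
  have ne: "take i p \<noteq> []" using i(1,2) by (cases p) auto
  then have "last (take i p) = p ! (i - 1)" using i(1,2) by (simp add: last_conv_nth)
  then show "lex_less G p q" unfolding lex_less_def using p q ne i(4)
    by (intro disjI2 exI[of _ "take i p"] exI[of _ "p ! i"] exI[of _ "q ! i"]
        exI[of _ "drop (Suc i) p"] exI[of _ "drop (Suc i) q"]) simp
qed

lemma lex_less_irrefl: "fin_eo_graph G \<Longrightarrow> \<not> lex_less G p p"
  by (simp add: lex_less_same_length_iff eord_irrefl)

lemma lex_less_trans:
  assumes G: "fin_eo_graph G" and "length p = length q" "length q = length r"
    and "lex_less G p q" "lex_less G q r"
  shows "lex_less G p r"
proof -
  obtain i where i: "0 < i" "i < length p" "\<forall>k<i. p ! k = q ! k" "eord G (p ! (i - 1)) (p ! i) (q ! i)"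
    using assms(2,4) lex_less_same_length_iff by blast
  obtain j where j: "0 < j" "j < length q" "\<forall>k<j. q ! k = r ! k" "eord G (q ! (j - 1)) (q ! j) (r ! j)"
    using assms(3,5) lex_less_same_length_iff by blast
  have "\<forall>k<min i j. p ! k = r ! k" using i(3) j(3) by simp
  moreover have "eord G (p ! (min i j - 1)) (p ! min i j) (r ! min i j)"
  proof (cases i j rule: linorder_cases)
    case less with i j show ?thesis by simp
  next
    case equal with i j eord_trans[OF G] show ?thesis by fastforce
  next
    case greater with i j show ?thesis by simp
  qed
  ultimately show ?thesis
    unfolding lex_less_same_length_iff[of p r, OF trans[OF assms(2,3)]]
    using i(1,2) j(1) by (intro exI[of _ "min i j"]) simp
qed

lemma lex_less_total:
  assumes G: "fin_eo_graph G" and p: "is_path G p" and q: "is_path G q"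
    and "hd p = hd q" "length p = length q" "p \<noteq> q"
  shows "lex_less G p q \<or> lex_less G q p"
proof -
  have "\<exists>i. i < length p \<and> p ! i \<noteq> q ! i" using assms(5,6) nth_equalityI by blast
  then obtain i where i: "i < length p" "p ! i \<noteq> q ! i"
    and "\<forall>k<i. \<not> (k < length p \<and> p ! k \<noteq> q ! k)"
    unfolding exists_least_iff[of "\<lambda>i. i < length p \<and> p ! i \<noteq> q ! i"] by blast
  then have below: "\<forall>k<i. p ! k = q ! k" by simp
  have "p ! 0 = q ! 0" using p q assms(4) by (simp add: is_path_def hd_conv_nth)
  then have "0 < i" using i(2) by (cases i) auto
  then have "Suc (i - 1) = i" "i < length q" using i(1) assms(5) by simp_all
  then have "(p ! (i - 1), p ! i) \<in> arcs G" "(q ! (i - 1), q ! i) \<in> arcs G"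
    using p q i(1) unfolding is_path_def by metis+
  moreover have "q ! (i - 1) = p ! (i - 1)" using below \<open>0 < i\<close> by simp
  ultimately have "eord G (p ! (i - 1)) (p ! i) (q ! i) \<or> eord G (p ! (i - 1)) (q ! i) (p ! i)"
    using eord_total[OF G] i(2) by simp
  moreover have "lex_less G p q" if "eord G (p ! (i - 1)) (p ! i) (q ! i)"
    using that \<open>0 < i\<close> i(1) below lex_less_same_length_iff[OF assms(5)] by blast
  moreover have "lex_less G q p" if "eord G (p ! (i - 1)) (q ! i) (p ! i)"
    unfolding lex_less_same_length_iff[OF assms(5)[symmetric]]
    using that \<open>0 < i\<close> i(1) below assms(5) by (intro exI[of _ i]) simp
  ultimately show ?thesis by blast
qed

lemma shortlex_less_irrefl: "fin_eo_graph G \<Longrightarrow> \<not> shortlex_less G p p"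
  by (simp add: shortlex_less_def lex_less_irrefl)

lemma shortlex_less_trans:
  assumes G: "fin_eo_graph G" and "p \<noteq> []" "q \<noteq> []" "r \<noteq> []"
    and "shortlex_less G p q" "shortlex_less G q r"
  shows "shortlex_less G p r"
  using assms(2-) lex_less_trans[OF G, of p q r] unfolding shortlex_less_def path_len_def
  by (cases p; cases q; cases r) auto

lemma shortlex_less_total:
  assumes G: "fin_eo_graph G" and "is_path G p" "is_path G q" "hd p = hd q" "p \<noteq> q"
  shows "shortlex_less G p q \<or> shortlex_less G q p"
  using assms lex_less_total[OF G, of p q] unfolding shortlex_less_def path_len_def is_path_def
  by (cases p; cases q) auto

lemma eo_hom_root: "eo_hom G H h \<Longrightarrow> root G \<in> verts G \<Longrightarrow> h (root G) = root H"
  by (simp add: eo_hom_def)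

lemma eo_hom_is_path: "eo_hom G H h \<Longrightarrow> is_path G p \<Longrightarrow> is_path H (map h p)"
  unfolding eo_hom_def is_path_def by fastforce

lemma eo_hom_trancl:
  assumes h: "eo_hom G H h" and ab: "(a, b) \<in> (arcs G)\<^sup>+"
  shows "(h a, h b) \<in> (arcs H)\<^sup>+"
  using ab
proof (induction rule: trancl_induct)
  case (base b)
  then show ?case using h by (simp add: eo_hom_def r_into_trancl')
next
  case (step b c)
  then show ?case using h by (meson eo_hom_def trancl.trancl_into_trancl)
qed

lemma lex_less_map:
  assumes h: "eo_hom G H h" and G: "fin_eo_graph G" and "lex_less G p q"
  shows "lex_less H (map h p) (map h q)"
  using assms(3) unfolding lex_less_def
proof (elim disjE exE conjE)
  assume "strict_prefix p q"
  then obtain v r where "q = p @ v # r" by (rule strict_prefixE')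
  then show "strict_prefix (map h p) (map h q) \<or> (\<exists>z v1 v2 r1 r2. z \<noteq> [] \<and>
      map h p = z @ v1 # r1 \<and> map h q = z @ v2 # r2 \<and> eord H (last z) v1 v2)"
    by (simp add: strict_prefixI')
next
  fix z v1 v2 r1 r2
  assume z: "z \<noteq> []" "p = z @ v1 # r1" "q = z @ v2 # r2" "eord G (last z) v1 v2"
  then have "eord H (h (last z)) (h v1) (h v2)"
    using h eord_arcs[OF G z(4)] unfolding eo_hom_def by blast
  then show "strict_prefix (map h p) (map h q) \<or> (\<exists>z v1 v2 r1 r2. z \<noteq> [] \<and>
      map h p = z @ v1 # r1 \<and> map h q = z @ v2 # r2 \<and> eord H (last z) v1 v2)"
    using z by (intro disjI2 exI[of _ "map h z"] exI[of _ "h v1"] exI[of _ "h v2"]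
        exI[of _ "map h r1"] exI[of _ "map h r2"]) (simp add: last_map)
qed

lemma shortlex_less_map:
  "eo_hom G H h \<Longrightarrow> fin_eo_graph G \<Longrightarrow> shortlex_less G p q \<Longrightarrow>
    shortlex_less H (map h p) (map h q)"
  unfolding shortlex_less_def path_len_def using lex_less_map by fastforce

lemma tpath_path_from_to:
  assumes "fin_arb T" "v \<in> verts T"
  shows "path_from_to T (tpath T v) (root T) v"
proof -
  have "\<exists>!p. path_from_to T p (root T) v" using assms by (simp add: fin_arb_def arborescence_def)
  then show ?thesis unfolding tpath_def by (rule theI')
qed

lemma tpath_eqI:
  assumes T: "fin_arb T" and p: "path_from_to T p (root T) v"
  shows "tpath T v = p"
proof -
  have "v \<in> verts T" using p by (auto simp: path_from_to_def is_path_def)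
  then have "\<exists>!p. path_from_to T p (root T) v" using T by (simp add: fin_arb_def arborescence_def)
  then show ?thesis unfolding tpath_def using p by (rule the1_equality)
qed

lemma tpath_snoc:
  assumes T: "fin_arb T" and ab: "(a, b) \<in> arcs T"
  shows "tpath T b = tpath T a @ [b]"
proof -
  have a: "a \<in> verts T" and b: "b \<in> verts T" using T ab by (auto simp: fin_arb_def fin_eo_graph_def)
  have "path_from_to T (tpath T a @ [b]) (root T) b"
    by (rule path_from_to_snoc[OF tpath_path_from_to[OF T a] ab b])
  then show ?thesis by (rule tpath_eqI[OF T])
qed

lemma fin_arb_connected_pg: "fin_arb T \<Longrightarrow> connected_pg T"
  unfolding connected_pg_def by (blast intro: tpath_path_from_to)

lemma eo_hom_tpath:
  assumes T: "fin_arb T" and T': "fin_arb T'" and h: "eo_hom T T' h" and v: "v \<in> verts T"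
  shows "tpath T' (h v) = map h (tpath T v)"
proof (rule tpath_eqI[OF T'])
  have "root T \<in> verts T" using T by (simp add: fin_arb_def fin_eo_graph_def)
  then show "path_from_to T' (map h (tpath T v)) (root T') (h v)"
    using tpath_path_from_to[OF T v] eo_hom_is_path[OF h] eo_hom_root[OF h]
    by (auto simp: path_from_to_def is_path_def hd_map last_map)
qed

definition depth :: "('a, 'b) eograph_scheme \<Rightarrow> 'a \<Rightarrow> nat" where
  "depth T v = path_len (tpath T v)"

lemma depth_arc:
  assumes T: "fin_arb T" and ab: "(a, b) \<in> arcs T"
  shows "depth T b = Suc (depth T a)"
proof -
  have "a \<in> verts T" using T ab by (auto simp: fin_arb_def fin_eo_graph_def)
  then have "tpath T a \<noteq> []"
    using tpath_path_from_to[OF T] by (simp add: path_from_to_def is_path_def)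
  then show ?thesis by (simp add: depth_def path_len_def tpath_snoc[OF T ab])
qed

lemma depth_less_trancl:
  assumes "fin_arb T" "(a, b) \<in> (arcs T)\<^sup>+"
  shows "depth T a < depth T b"
  using assms(2) by (induction rule: trancl_induct) (auto simp: depth_arc[OF assms(1)])

lemma exists_path_from_to_depth:
  assumes T: "fin_arb T" and u: "u \<in> verts T" and uv: "(u, v) \<in> (arcs T)\<^sup>*"
  shows "\<exists>w. path_from_to T w u v \<and> depth T u + path_len w = depth T v"
  using uv
proof (induction rule: rtrancl_induct)
  case base
  show ?case using u by (intro exI[of _ "[u]"]) (simp add: path_from_to_def is_path_def path_len_def)
next
  case (step y z)
  then obtain w where w: "path_from_to T w u y" "depth T u + path_len w = depth T y" by blast
  have "z \<in> verts T" using T step(2) by (auto simp: fin_arb_def fin_eo_graph_def)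
  then have "path_from_to T (w @ [z]) u z" by (rule path_from_to_snoc[OF w(1) step(2)])
  moreover have "path_len (w @ [z]) = Suc (path_len w)"
    using w(1) by (cases w) (simp_all add: path_from_to_def is_path_def path_len_def)
  ultimately show ?case using w(2) depth_arc[OF T step(2)] by (intro exI[of _ "w @ [z]"]) simp
qed

lemma depth_eo_hom:
  "fin_arb T \<Longrightarrow> fin_arb T' \<Longrightarrow> eo_hom T T' h \<Longrightarrow> v \<in> verts T \<Longrightarrow> depth T' (h v) = depth T v"
  by (simp add: depth_def path_len_def eo_hom_tpath)

lemma Gamma_simps [simp]:
  "verts (Gamma T) = verts T" "arcs (Gamma T) = (arcs T)\<^sup>+" "root (Gamma T) = root T"
  "eord (Gamma T) u v1 v2 \<longleftrightarrow> (u, v1) \<in> (arcs T)\<^sup>+ \<and> (u, v2) \<in> (arcs T)\<^sup>+ \<and>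
     shortlex_less T (tpath T v1) (tpath T v2)"
  by (simp_all add: Gamma_def)

lemma is_path_Gamma: "is_path T p \<Longrightarrow> is_path (Gamma T) p"
  by (erule is_path_mono) auto

lemma path_len_Gamma_le:
  "fin_arb T \<Longrightarrow> is_path (Gamma T) p \<Longrightarrow> depth T (hd p) + path_len p \<le> depth T (last p)"
  by (erule path_len_le_strict_mono) (simp add: depth_less_trancl)

lemma longest_path_Gamma_iff:
  assumes T: "fin_arb T"
  shows "longest_path (Gamma T) p u v \<longleftrightarrow>
    path_from_to (Gamma T) p u v \<and> depth T u + path_len p = depth T v"
proof -
  have bound: "depth T u + path_len q \<le> depth T v" if "path_from_to (Gamma T) q u v" for q
    using that path_len_Gamma_le[OF T] by (auto simp: path_from_to_def)
  have attained: "\<exists>w. path_from_to (Gamma T) w u v \<and> depth T u + path_len w = depth T v"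
    if "path_from_to (Gamma T) p u v"
  proof -
    have "(u, v) \<in> (arcs T)\<^sup>*" using is_path_rtrancl[of "Gamma T" p] that by (simp add: path_from_to_def)
    moreover have "u \<in> verts T" using that by (auto simp: path_from_to_def is_path_def)
    ultimately show ?thesis
      using exists_path_from_to_depth[OF T] is_path_Gamma by (fastforce simp: path_from_to_def)
  qed
  show ?thesis
    unfolding longest_path_def using bound attained by (metis add_le_cancel_left le_antisym)
qed

lemma fin_eo_graph_Gamma:
  assumes T: "fin_arb T"
  shows "fin_eo_graph (Gamma T)"
proof (rule fin_eo_graphI)
  have G: "fin_eo_graph T" using T by (simp add: fin_arb_def)
  then have "(arcs T)\<^sup>+ \<subseteq> verts T \<times> verts T" by (rule trancl_arcs_subset)
  then have root_path: "is_path T (tpath T v) \<and> hd (tpath T v) = root T \<and> last (tpath T v) = v"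
    if "(u, v) \<in> (arcs T)\<^sup>+" for u v
    using that tpath_path_from_to[OF T] by (fastforce simp: path_from_to_def)
  show "finite (verts (Gamma T))" "root (Gamma T) \<in> verts (Gamma T)"
    "arcs (Gamma T) \<subseteq> verts (Gamma T) \<times> verts (Gamma T)"
    using G \<open>(arcs T)\<^sup>+ \<subseteq> _\<close> by (simp_all add: fin_eo_graph_def)
  show "\<And>u a b. eord (Gamma T) u a b \<Longrightarrow> (u, a) \<in> arcs (Gamma T) \<and> (u, b) \<in> arcs (Gamma T)"
    "\<And>u a. \<not> eord (Gamma T) u a a"
    using shortlex_less_irrefl[OF G] by simp_all
  show "eord (Gamma T) u a c" if "eord (Gamma T) u a b" "eord (Gamma T) u b c" for u a b c
    using that shortlex_less_trans[OF G, of "tpath T a" "tpath T b" "tpath T c"]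
      root_path[of u a] root_path[of u b] root_path[of u c] by (simp add: is_path_def)
  show "eord (Gamma T) u a b \<or> eord (Gamma T) u b a"
    if "(u, a) \<in> arcs (Gamma T)" "(u, b) \<in> arcs (Gamma T)" "a \<noteq> b" for u a b
  proof -
    have "tpath T a \<noteq> tpath T b" using that root_path[of u a] root_path[of u b] by auto
    then show ?thesis using that shortlex_less_total[OF G] root_path[of u a] root_path[of u b] by simp
  qed
qed

lemma connected_pg_Gamma:
  assumes T: "fin_arb T"
  shows "connected_pg (Gamma T)"
proof -
  have "path_from_to (Gamma T) (tpath T v) (root (Gamma T)) v" if "v \<in> verts T" for v
    using tpath_path_from_to[OF T that] by (auto simp: path_from_to_def intro: is_path_Gamma)
  then show ?thesis unfolding connected_pg_def by auto
qed

lemma tarb_obj_Gamma: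
  assumes T: "fin_arb T"
  shows "tarb_obj (Gamma T)"
proof -
  have "fin_eo_graph T" "arborescence T" using T by (simp_all add: fin_arb_def)
  then show ?thesis unfolding tarb_obj_def
    using fin_eo_graph_Gamma[OF T] connected_pg_Gamma[OF T] fin_arb_connected_pg[OF T]
    by (intro conjI exI[of _ T]) simp_all
qed

lemma eo_hom_Gamma:
  assumes T: "fin_arb T" and T': "fin_arb T'" and h: "eo_hom T T' h"
  shows "eo_hom (Gamma T) (Gamma T') h"
  unfolding eo_hom_def
proof (intro conjI allI impI)
  fix u v1 v2
  assume arcs: "(u, v1) \<in> arcs (Gamma T)" "(u, v2) \<in> arcs (Gamma T)"
    and less: "eord (Gamma T) u v1 v2"
  have G: "fin_eo_graph T" using T by (simp add: fin_arb_def)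
  have "v1 \<in> verts T" "v2 \<in> verts T" using arcs trancl_arcs_subset[OF G] by auto
  then have "shortlex_less T' (tpath T' (h v1)) (tpath T' (h v2))"
    using shortlex_less_map[OF h G] less by (simp add: eo_hom_tpath[OF T T' h])
  then show "eord (Gamma T') (h u) (h v1) (h v2)"
    using arcs eo_hom_trancl[OF h] by simp
qed (use h eo_hom_trancl[OF h] in \<open>auto simp: eo_hom_def\<close>)

lemma tarb_mor_Gamma_mor:
  assumes "finarb_mor T T' h"
  shows "tarb_mor (Gamma T) (Gamma T') (Gamma_mor h)"
proof -
  have T: "fin_arb T" and T': "fin_arb T'" and h: "eo_hom T T' h"
    using assms by (simp_all add: finarb_mor_def)
  have hom: "eo_hom (Gamma T) (Gamma T') h" by (rule eo_hom_Gamma[OF T T' h])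
  have "longest_path (Gamma T') (map h p) (h u) (h v)" if "longest_path (Gamma T) p u v" for p u v
  proof -
    have p: "path_from_to (Gamma T) p u v" and len: "depth T u + path_len p = depth T v"
      using that longest_path_Gamma_iff[OF T] by simp_all
    then have "u \<in> verts T" "v \<in> verts T" by (auto simp: path_from_to_def is_path_def)
    then have "depth T' (h u) + path_len (map h p) = depth T' (h v)"
      using len depth_eo_hom[OF T T' h] by (simp add: path_len_def)
    moreover have "path_from_to (Gamma T') (map h p) (h u) (h v)"
      using p eo_hom_is_path[OF hom] by (auto simp: path_from_to_def is_path_def hd_map last_map)
    ultimately show ?thesis using longest_path_Gamma_iff[OF T'] by simp
  qed
  then show ?thesis
    unfolding tarb_mor_def Gamma_mor_def using tarb_obj_Gamma[OF T] tarb_obj_Gamma[OF T'] hom by simp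
qed

theorem lemma10p6:
  fixes T :: "'a eograph" and T' :: "'b eograph" and T'' :: "'c eograph"
    and h :: "'a \<Rightarrow> 'b" and g :: "'b \<Rightarrow> 'c"
  assumes "fin_arb T" and "fin_arb T'" and "fin_arb T''"
    and "finarb_mor T T' h" and "finarb_mor T' T'' g"
  shows "tarb_obj (Gamma T)
    \<and> tarb_mor (Gamma T) (Gamma T') (Gamma_mor h)
    \<and> tarb_mor (Gamma T) (Gamma T) (Gamma_mor id)
    \<and> Gamma_mor (g \<circ> h) = Gamma_mor g \<circ> Gamma_mor h"
proof (intro conjI)
  show "tarb_obj (Gamma T)" by (rule tarb_obj_Gamma[OF assms(1)])
  show "tarb_mor (Gamma T) (Gamma T') (Gamma_mor h)" by (rule tarb_mor_Gamma_mor[OF assms(4)])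
  have "finarb_mor T T id" using assms(1) by (simp add: finarb_mor_def eo_hom_def)
  then show "tarb_mor (Gamma T) (Gamma T) (Gamma_mor id)" by (rule tarb_mor_Gamma_mor)
  show "Gamma_mor (g \<circ> h) = Gamma_mor g \<circ> Gamma_mor h" by (simp add: Gamma_mor_def comp_def)
qed

end
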